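(* There exists a linear operator $T:\mathbb{R}[x]\to\mathbb{R}[x]$ which is an infinite order differential operator and a hyperbolicity preserver, but which is not monotone.
   Context: $D=\frac{d}{dx}$. Every linear operator $T:\mathbb{R}[x]\to\mathbb{R}[x]$ can be written uniquely as $T=\sum_{k=0}^\infty Q_k(x)D^k$ with $Q_k\in\mathbb{R}[x]$ (meaning $T[p]=\sum_kQ_kD^k[p]$ for all polynomials $p$). $T$ is an infinite order differential operator if $Q_k\not\equiv0$ for infinitely many $k$. $T$ is a hyperbolicity preserver if $T[p]$ has only real zeros whenever $p$ has only real zeros. $T$ is monotone if the degrees of its nonzero coefficient polynomials are nondecreasing, i.e. $\deg Q_k\le\deg Q_l$ whenever $k<l$ and $Q_k\not\equiv0$, $Q_l\not\equiv0$. *)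

theory Defs
  imports "HOL-Computational_Algebra.Polynomial"
begin

definition hyperbolic :: "real poly \<Rightarrow> bool" where
  "hyperbolic p \<longleftrightarrow> p = 0 \<or>
     (\<forall>z::complex. poly (map_poly complex_of_real p) z = 0 \<longrightarrow> Im z = 0)"

definition linear_poly_op :: "(real poly \<Rightarrow> real poly) \<Rightarrow> bool" where
  "linear_poly_op T \<longleftrightarrow>
     (\<forall>p q. T (p + q) = T p + T q) \<and> (\<forall>c p. T (smult c p) = smult c (T p))"

text \<open>T = sum_k Q_k D^k : T p = sum_k Q_k * D^k p (finite sum, D^k p = 0 for k > deg p).\<close>
definition diff_rep :: "(real poly \<Rightarrow> real poly) \<Rightarrow> (nat \<Rightarrow> real poly) \<Rightarrow> bool" where
  "diff_rep T Q \<longleftrightarrow> (\<forall>p. T p = (\<Sum>k\<le>degree p. Q k * (pderiv ^^ k) p))"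

definition infinite_order :: "(nat \<Rightarrow> real poly) \<Rightarrow> bool" where
  "infinite_order Q \<longleftrightarrow> infinite {k. Q k \<noteq> 0}"

definition hyperbolicity_preserver :: "(real poly \<Rightarrow> real poly) \<Rightarrow> bool" where
  "hyperbolicity_preserver T \<longleftrightarrow> (\<forall>p. hyperbolic p \<longrightarrow> hyperbolic (T p))"

definition monotone_coeffs :: "(nat \<Rightarrow> real poly) \<Rightarrow> bool" where
  "monotone_coeffs Q \<longleftrightarrow>
     (\<forall>k l. k < l \<and> Q k \<noteq> 0 \<and> Q l \<noteq> 0 \<longrightarrow> degree (Q k) \<le> degree (Q l))"

end

theory Submission
  imports Defs
begin

text \<open>By Taylor's formula, evaluation at a point is itself a differential operator,
  \<open>p(a) = \<Sum>\<^sub>k ((a - x)\<^sup>k / k!) D\<^sup>k p\<close>, of infinite order. Differential operators are closed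
  under sums, left multiplication by polynomials and precomposition with \<open>D\<close>, so
  \<open>T p = 2 p(0) + x p'(0) + p''(0)\<close> is one as well; its \<open>k\<close>-th coefficient has leading term
  \<open>(-1)\<^sup>k (2 - k) x\<^sup>k / k!\<close>, hence \<open>T\<close> has infinite order, while \<open>Q\<^sub>1 = -x\<close> and \<open>Q\<^sub>2 = 1\<close> break
  monotonicity. Since every \<open>T p\<close> has degree at most one, \<open>T\<close> trivially preserves hyperbolicity.\<close>

lemma higher_pderiv_eq_0:
  fixes p :: "'a::{comm_semiring_1,semiring_no_zero_divisors} poly"
  assumes "degree p < k"
  shows "(pderiv ^^ k) p = 0"
  using assms by (intro poly_eqI) (simp add: coeff_higher_pderiv coeff_eq_0)

definition taylor_weight :: "'a::field_char_0 \<Rightarrow> nat \<Rightarrow> 'a poly" where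
  "taylor_weight a k = smult (inverse (fact k)) ([:a, -1:] ^ k)"

lemma taylor_weight_0 [simp]: "taylor_weight a 0 = 1"
  by (simp add: taylor_weight_def)

lemma pderiv_taylor_weight_Suc: "pderiv (taylor_weight a (Suc k)) = - taylor_weight a k"
proof -
  have "pderiv ([:a, -1:] ^ Suc k) = smult (- of_nat (Suc k)) ([:a, -1:] ^ k)"
    by (simp add: pderiv_power_Suc pderiv_pCons del: power_Suc)
  moreover have "inverse (fact (Suc k)) * - of_nat (Suc k) = - (inverse (fact k) :: 'a)"
    by (simp del: of_nat_Suc)
  ultimately show ?thesis
    by (simp add: taylor_weight_def pderiv_smult del: power_Suc)
qed

lemma poly_taylor_weight_at: "poly (taylor_weight a k) a = (if k = 0 then 1 else 0)"
  by (simp add: taylor_weight_def)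

lemma taylor_weight_at_0: "taylor_weight 0 k = monom ((-1) ^ k / fact k) k"
proof -
  have "[:0, -1:] = monom (-1 :: 'a) 1"
    by (simp add: monom_Suc monom_0)
  then show ?thesis
    by (simp add: taylor_weight_def monom_power smult_monom field_simps)
qed

lemma pderiv_taylor_sum:
  "pderiv (\<Sum>k\<le>N. taylor_weight a k * (pderiv ^^ k) p) = taylor_weight a N * (pderiv ^^ Suc N) p"
proof (induction N)
  case 0
  then show ?case by (simp add: pderiv_mult)
next
  case (Suc N)
  then show ?case
    by (simp add: pderiv_add pderiv_mult pderiv_taylor_weight_Suc algebra_simps)
qed

theorem taylor_expansion:
  assumes "degree p \<le> N"
  shows "(\<Sum>k\<le>N. taylor_weight a k * (pderiv ^^ k) p) = [:poly p a:]"
    (is "?S = _")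
proof -
  have "pderiv ?S = 0"
    using assms by (simp add: pderiv_taylor_sum higher_pderiv_eq_0 del: funpow.simps)
  then obtain c where "?S = [:c:]"
    by (metis pderiv_eq_0_iff degree_eq_zeroE)
  moreover have "poly ?S a = poly p a"
    by (simp add: poly_sum poly_taylor_weight_at if_distrib[of "\<lambda>x. x * _"] sum.delta[of _ 0]
        cong: if_cong)
  ultimately show ?thesis by simp
qed

lemma diff_rep_sum_upto:
  assumes "diff_rep T Q" and "degree p \<le> N"
  shows "T p = (\<Sum>k\<le>N. Q k * (pderiv ^^ k) p)"
proof -
  have "T p = (\<Sum>k\<le>degree p. Q k * (pderiv ^^ k) p)"
    using assms(1) by (simp add: diff_rep_def)
  also have "\<dots> = (\<Sum>k\<le>N. Q k * (pderiv ^^ k) p)"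
    using assms(2) by (intro sum.mono_neutral_left) (auto simp: higher_pderiv_eq_0)
  finally show ?thesis .
qed

lemma diff_rep_eval: "diff_rep (\<lambda>p. [:poly p a:]) (taylor_weight a)"
  by (simp add: diff_rep_def taylor_expansion)

lemma diff_rep_add:
  "diff_rep T Q \<Longrightarrow> diff_rep S R \<Longrightarrow> diff_rep (\<lambda>p. T p + S p) (\<lambda>k. Q k + R k)"
  by (simp add: diff_rep_def distrib_right sum.distrib)

lemma diff_rep_mult_left: "diff_rep T Q \<Longrightarrow> diff_rep (\<lambda>p. r * T p) (\<lambda>k. r * Q k)"
  by (simp add: diff_rep_def sum_distrib_left mult.assoc)

lemma diff_rep_comp_pderiv:
  assumes "diff_rep T Q"
  shows "diff_rep (T \<circ> pderiv) (case_nat 0 Q)"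
  unfolding diff_rep_def
proof
  fix p :: "real poly"
  have "T (pderiv p) = (\<Sum>k\<le>degree p. Q k * (pderiv ^^ k) (pderiv p))"
    using assms by (rule diff_rep_sum_upto) (simp add: degree_pderiv)
  also have "\<dots> = (\<Sum>k\<le>Suc (degree p). case_nat 0 Q k * (pderiv ^^ k) p)"
    by (subst sum.atMost_Suc_shift) (simp add: funpow_Suc_right del: funpow.simps sum.atMost_Suc)
  also have "\<dots> = (\<Sum>k\<le>degree p. case_nat 0 Q k * (pderiv ^^ k) p)"
    by (simp add: higher_pderiv_eq_0 del: funpow.simps)
  finally show "(T \<circ> pderiv) p = (\<Sum>k\<le>degree p. case_nat 0 Q k * (pderiv ^^ k) p)"
    by simp
qed

lemma hyperbolic_linear: "hyperbolic [:a, b:]"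
proof (cases "b = 0")
  case True
  then show ?thesis by (auto simp: hyperbolic_def map_poly_pCons)
next
  case False
  have "z = - complex_of_real (a / b)"
    if "complex_of_real a + z * complex_of_real b = 0" for z
    using that False by (simp add: field_simps eq_neg_iff_add_eq_0 add.commute)
  then show ?thesis by (force simp: hyperbolic_def map_poly_pCons)
qed

definition example_op :: "real poly \<Rightarrow> real poly" where
  "example_op p = [:2 * poly p 0 + poly (pderiv (pderiv p)) 0, poly (pderiv p) 0:]"

definition example_coeffs :: "nat \<Rightarrow> real poly" where
  "example_coeffs k = [:2:] * taylor_weight 0 k + monom 1 1 * case_nat 0 (taylor_weight 0) k
     + case_nat 0 (case_nat 0 (taylor_weight 0)) k"

lemma linear_example_op: "linear_poly_op example_op"
  by (simp add: linear_poly_op_def example_op_def pderiv_add pderiv_smult algebra_simps)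

lemma hyperbolicity_preserver_example_op: "hyperbolicity_preserver example_op"
  by (simp add: hyperbolicity_preserver_def example_op_def hyperbolic_linear)

lemma diff_rep_example_op: "diff_rep example_op example_coeffs"
proof -
  let ?E = "\<lambda>p. [:poly p 0:]"
  have op_eq: "example_op =
      (\<lambda>p. [:2:] * ?E p + monom 1 1 * (?E \<circ> pderiv) p + (?E \<circ> pderiv \<circ> pderiv) p)"
    by (auto simp: example_op_def monom_Suc monom_0)
  show ?thesis
    unfolding op_eq example_coeffs_def
    by (intro diff_rep_add diff_rep_mult_left diff_rep_comp_pderiv diff_rep_eval)
qed

lemma example_coeffs_1: "example_coeffs 1 = monom (-1) 1"
  by (simp add: example_coeffs_def taylor_weight_at_0 monom_0 mult_monom smult_monom add_monom)

lemma example_coeffs_2: "example_coeffs 2 = 1"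
  by (simp add: example_coeffs_def taylor_weight_at_0 numeral_2_eq_2 monom_0 mult_monom smult_monom
      add_monom)

lemma coeff_example_coeffs:
  assumes "2 \<le> k"
  shows "coeff (example_coeffs k) k = (-1) ^ k * (2 - real k) / fact k"
proof -
  obtain j where k: "k = Suc (Suc j)"
    using assms by (metis add_2_eq_Suc le_Suc_ex)
  have "coeff (example_coeffs k) k =
      2 * (-1) ^ Suc (Suc j) / fact (Suc (Suc j)) + (-1) ^ Suc j / fact (Suc j)"
    unfolding k
    by (simp add: example_coeffs_def taylor_weight_at_0 mult_monom coeff_monom del: fact_Suc)
  also have "\<dots> = (-1) ^ k * (2 - real k) / fact k"
  proof -
    have "fact (Suc (Suc j)) = real (Suc (Suc j)) * fact (Suc j)" by simp
    moreover have "fact (Suc j) > (0::real)" by simp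
    ultimately show ?thesis unfolding k by (simp add: field_simps del: fact_Suc of_nat_Suc)
  qed
  finally show ?thesis .
qed

lemma infinite_order_example_coeffs: "infinite_order example_coeffs"
proof -
  have "example_coeffs k \<noteq> 0" if "3 \<le> k" for k
  proof
    assume "example_coeffs k = 0"
    then have "coeff (example_coeffs k) k = 0" by simp
    moreover have "coeff (example_coeffs k) k = (-1) ^ k * (2 - real k) / fact k"
      using that by (simp add: coeff_example_coeffs)
    ultimately show False using that by simp
  qed
  then have "{3..} \<subseteq> {k. example_coeffs k \<noteq> 0}"
    by auto
  then show ?thesis
    unfolding infinite_order_def using infinite_Ici finite_subset by blast
qed

lemma not_monotone_example_coeffs: "\<not> monotone_coeffs example_coeffs"
proof -
  have "(1::nat) < 2" "example_coeffs 1 \<noteq> 0" "example_coeffs 2 \<noteq> 0"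
    "\<not> degree (example_coeffs 1) \<le> degree (example_coeffs 2)"
    unfolding example_coeffs_1 example_coeffs_2 by (simp_all add: degree_monom_eq)
  then show ?thesis
    unfolding monotone_coeffs_def by blast
qed

theorem mainTheorem4:
  shows "\<exists>(T :: real poly \<Rightarrow> real poly) Q. linear_poly_op T \<and> diff_rep T Q \<and>
           infinite_order Q \<and> hyperbolicity_preserver T \<and> \<not> monotone_coeffs Q"
  using linear_example_op diff_rep_example_op infinite_order_example_coeffs
    hyperbolicity_preserver_example_op not_monotone_example_coeffs by blast

end
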